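(* For every $r\in\mathbb{F}_2((x^{-1}))$ we have $T([r])=[S(r)]$, and $T^n([r])=[S^n(r)]$ for all $n\in\mathbb{N}$.
   Context: $\mathbb{F}_2((x^{-1}))$ is the field of formal series $\sum_{z\in\mathbb{Z}}a_zx^z$, $a_z\in\mathbb{F}_2$, with $a_z\ne0$ for only finitely many positive $z$. The polynomial part is $[\sum a_zx^z]=\sum_{z\ge0}a_zx^z$. $S(r)=\frac{r}{x+1}$ if $[r](1)=0$ and $S(r)=\frac{xr}{x+1}$ if $[r](1)=1$. $T:\mathbb{F}_2[x]\to\mathbb{F}_2[x]$ is given by $T(f)=\frac{f}{x+1}$ if $f(1)=0$ and $T(f)=\frac{xf+1}{x+1}$ if $f(1)=1$. *)

theory Defs
  imports "HOL-Computational_Algebra.Polynomial" "HOL-Library.Z2"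
begin

text \<open>Elements of F_2((x^-1)) are represented by their coefficient functions
  r :: int \<Rightarrow> bit (r z is the coefficient of x^z), with only finitely many
  nonzero coefficients at positive exponents.\<close>

definition laurent :: "(int \<Rightarrow> bit) \<Rightarrow> bool" where
  "laurent r \<longleftrightarrow> finite {z. z > 0 \<and> r z \<noteq> 0}"

definition mult_x :: "(int \<Rightarrow> bit) \<Rightarrow> (int \<Rightarrow> bit)" where
  "mult_x r = (\<lambda>z. r (z - 1))"

definition mult_x1 :: "(int \<Rightarrow> bit) \<Rightarrow> (int \<Rightarrow> bit)" where
  "mult_x1 r = (\<lambda>z. r (z - 1) + r z)"

definition div_x1 :: "(int \<Rightarrow> bit) \<Rightarrow> (int \<Rightarrow> bit)" where
  "div_x1 r = (THE s. laurent s \<and> mult_x1 s = r)"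

definition poly_part :: "(int \<Rightarrow> bit) \<Rightarrow> bit poly" where
  "poly_part r = (\<Sum>n\<in>{n::nat. r (int n) \<noteq> 0}. monom (r (int n)) n)"

definition S :: "(int \<Rightarrow> bit) \<Rightarrow> (int \<Rightarrow> bit)" where
  "S r = (if poly (poly_part r) 1 = 0 then div_x1 r else div_x1 (mult_x r))"

definition T :: "bit poly \<Rightarrow> bit poly" where
  "T f = (if poly f 1 = 0 then f div [:1, 1:] else (monom 1 1 * f + 1) div [:1, 1:])"

end

theory Submission
  imports Defs
begin

text \<open>Division by x + 1 commutes with taking polynomial parts:
  [r / (x+1)] = [r] div (x+1), because [(x+1) s] and (x+1) [s] differ only by a constant,
  and polynomial division by x + 1 is additive and sends constants to 0. The same holds for
  [x r] versus x [r]. So in both cases of the definition of S, [S r] is [r] div (x+1)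
  resp. x [r] div (x+1), and the latter equals (x [r] + 1) div (x+1). Iterating
  gives the statement for T^n, since S preserves F_2((x^-1)).\<close>

lemma bit_add_self [simp]: "(a::bit) + a = 0"
  by (cases a) simp_all

lemma laurentE:
  assumes "laurent r"
  obtains N where "\<And>z. z > N \<Longrightarrow> r z = 0"
proof -
  have "finite {z. z > 0 \<and> r z \<noteq> 0}" using assms by (simp add: laurent_def)
  then obtain B where B: "\<And>z. z \<in> {z. z > 0 \<and> r z \<noteq> 0} \<Longrightarrow> z \<le> B"
    using bdd_above_finite by (fastforce simp: bdd_above_def)
  show ?thesis
  proof (rule that[of "max B 0"])
    fix z :: int
    assume "z > max B 0"
    then show "r z = 0" using B[of z] by force
  qed
qed

lemma laurentI:
  assumes "\<And>z. z > N \<Longrightarrow> r z = 0"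
  shows "laurent r"
proof -
  have "{z. z > 0 \<and> r z \<noteq> 0} \<subseteq> {0..N}"
    using assms by (auto simp: not_less[symmetric])
  then show ?thesis unfolding laurent_def by (rule finite_subset) simp
qed

lemma laurent_mult_x:
  assumes "laurent r"
  shows "laurent (mult_x r)"
proof -
  obtain N where "\<And>z. z > N \<Longrightarrow> r z = 0" using laurentE[OF assms] by blast
  then show ?thesis by (intro laurentI[of "N + 1"]) (simp add: mult_x_def)
qed

lemma laurent_mult_x1:
  assumes "laurent r"
  shows "laurent (mult_x1 r)"
proof -
  obtain N where "\<And>z. z > N \<Longrightarrow> r z = 0" using laurentE[OF assms] by blast
  then show ?thesis by (intro laurentI[of "N + 1"]) (simp add: mult_x1_def)
qed

lemma mult_x1_surj:
  assumes "laurent r"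
  shows "\<exists>s. laurent s \<and> mult_x1 s = r"
proof -
  obtain N where N: "\<And>z. z > N \<Longrightarrow> r z = 0" using laurentE[OF assms] by blast
  \<comment> \<open>r / (x+1) = r x^-1 + r x^-2 + ..., truncated to the finitely many nonzero top terms\<close>
  define s where "s z = (\<Sum>k\<in>{z<..N}. r k)" for z
  have "mult_x1 s z = r z" for z
  proof (cases "z \<le> N")
    case True
    then have "{z - 1<..N} = insert z {z<..N}" by auto
    then have "s (z - 1) = r z + s z" by (simp add: s_def)
    then show ?thesis by (simp del: add_bit_eq_xor add: mult_x1_def add.assoc)
  next
    case False
    then show ?thesis using N[of z] by (simp add: mult_x1_def s_def)
  qed
  moreover have "laurent s"
    by (rule laurentI[of N]) (simp add: s_def)
  ultimately show ?thesis by blast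
qed

lemma mult_x1_inj:
  assumes "laurent s" "laurent s'" "mult_x1 s = mult_x1 s'"
  shows "s = s'"
proof
  fix z
  obtain N1 where N1: "\<And>z. z > N1 \<Longrightarrow> s z = 0" using laurentE[OF assms(1)] by blast
  obtain N2 where N2: "\<And>z. z > N2 \<Longrightarrow> s' z = 0" using laurentE[OF assms(2)] by blast
  define M where "M = max (max N1 N2) z + 1"
  have step: "s (w - 1) = s' (w - 1)" if "s w = s' w" for w
  proof -
    have "s (w - 1) + s w = s' (w - 1) + s' w"
      using fun_cong[OF assms(3), of w] by (simp add: mult_x1_def)
    then show ?thesis using that by (simp del: add_bit_eq_xor)
  qed
  have "s (M - int k) = s' (M - int k)" for k
  proof (induction k)
    case 0
    then show ?case using N1[of M] N2[of M] by (simp add: M_def)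
  next
    case (Suc k)
    then have "s (M - int k - 1) = s' (M - int k - 1)" by (intro step) simp
    then show ?case by (simp add: algebra_simps)
  qed
  moreover have "M - int (nat (M - z)) = z" unfolding M_def by linarith
  ultimately show "s z = s' z" by metis
qed

lemma div_x1_eqI:
  assumes "laurent s" "mult_x1 s = r"
  shows "div_x1 r = s"
  unfolding div_x1_def using assms mult_x1_inj by (intro the_equality) blast+

lemma laurent_div_x1: "laurent r \<Longrightarrow> laurent (div_x1 r)"
  and mult_x1_div_x1: "laurent r \<Longrightarrow> mult_x1 (div_x1 r) = r"
  using mult_x1_surj div_x1_eqI by metis+

lemma laurent_S: "laurent r \<Longrightarrow> laurent (S r)"
  by (simp add: S_def laurent_div_x1 laurent_mult_x)

lemma coeff_poly_part:
  assumes "laurent r"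
  shows "coeff (poly_part r) n = r (int n)"
proof -
  obtain N where N: "\<And>z. z > N \<Longrightarrow> r z = 0" using laurentE[OF assms] by blast
  have "{n::nat. r (int n) \<noteq> 0} \<subseteq> {..nat N}"
  proof
    fix n
    assume "n \<in> {n. r (int n) \<noteq> 0}"
    then have "\<not> int n > N" using N by auto
    then show "n \<in> {..nat N}" by simp
  qed
  then have fin: "finite {n::nat. r (int n) \<noteq> 0}"
    by (rule finite_subset) simp
  have "coeff (poly_part r) n = (\<Sum>m\<in>{n::nat. r (int n) \<noteq> 0}. coeff (monom (r (int m)) m) n)"
    unfolding poly_part_def by (simp add: coeff_sum)
  also have "\<dots> = (\<Sum>m\<in>{n::nat. r (int n) \<noteq> 0}. if m = n then r (int m) else 0)"
    by (intro sum.cong) (auto simp: coeff_monom)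
  also have "\<dots> = r (int n)"
    using fin by (simp add: sum.delta)
  finally show ?thesis .
qed

lemma poly_part_mult_x1:
  assumes "laurent s"
  shows "poly_part (mult_x1 s) = [:1, 1:] * poly_part s + [:s (-1):]"
proof (rule poly_eqI)
  fix n
  have "coeff (poly_part (mult_x1 s)) n = mult_x1 s (int n)"
    by (rule coeff_poly_part[OF laurent_mult_x1[OF assms]])
  also have "\<dots> = s (int n - 1) + s (int n)"
    by (simp add: mult_x1_def)
  also have "\<dots> = coeff ([:1, 1:] * poly_part s + [:s (-1):]) n"
    by (cases n) (simp_all del: add_bit_eq_xor add: coeff_poly_part[OF assms] coeff_pCons algebra_simps)
  finally show "coeff (poly_part (mult_x1 s)) n = coeff ([:1, 1:] * poly_part s + [:s (-1):]) n" .
qed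

lemma poly_part_mult_x:
  assumes "laurent r"
  shows "poly_part (mult_x r) = monom 1 1 * poly_part r + [:r (-1):]"
proof (rule poly_eqI)
  fix n
  have "coeff (poly_part (mult_x r)) n = mult_x r (int n)"
    by (rule coeff_poly_part[OF laurent_mult_x[OF assms]])
  also have "\<dots> = r (int n - 1)"
    by (simp add: mult_x_def)
  also have "\<dots> = coeff (monom 1 1 * poly_part r + [:r (-1):]) n"
    by (cases n) (simp_all del: add_bit_eq_xor add: coeff_poly_part[OF assms] coeff_monom_mult coeff_pCons)
  finally show "coeff (poly_part (mult_x r)) n = coeff (monom 1 1 * poly_part r + [:r (-1):]) n" .
qed

lemma div_add_const_poly:
  fixes p d :: "'a::field poly"
  assumes "degree d > 0"
  shows "(p + [:c:]) div d = p div d"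
  using assms by (simp add: poly_div_add_left div_poly_less)

lemma poly_part_div_x1:
  assumes "laurent r"
  shows "poly_part (div_x1 r) = poly_part r div [:1, 1:]"
proof -
  have "poly_part r = [:1, 1:] * poly_part (div_x1 r) + [:div_x1 r (-1):]"
    using poly_part_mult_x1[OF laurent_div_x1[OF assms]] by (simp add: mult_x1_div_x1 assms)
  then show ?thesis
    by (simp add: div_add_const_poly del: mult_pCons_left)
qed

lemma T_poly_part:
  assumes "laurent r"
  shows "T (poly_part r) = poly_part (S r)"
proof (cases "poly (poly_part r) 1 = 0")
  case True
  then show ?thesis by (simp add: T_def S_def poly_part_div_x1 assms)
next
  case False
  have "poly_part (S r) = (monom 1 1 * poly_part r + [:r (-1):]) div [:1, 1:]"
    using False by (simp add: S_def poly_part_div_x1 laurent_mult_x poly_part_mult_x assms)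
  also have "\<dots> = (monom 1 1 * poly_part r + [:1:]) div [:1, 1:]"
    by (simp only: div_add_const_poly[of "[:1, 1:]", simplified])
  finally show ?thesis
    using False by (simp add: T_def one_pCons)
qed

lemma funpow_intertwine_on:
  assumes "\<And>x. P x \<Longrightarrow> P (h x)"
    and "\<And>x. P x \<Longrightarrow> f (g x) = g (h x)"
    and "P x"
  shows "(f ^^ n) (g x) = g ((h ^^ n) x)"
proof -
  have "P ((h ^^ n) x)" for n
    by (induction n) (simp_all add: assms)
  then show ?thesis
    by (induction n) (simp_all add: assms(2))
qed

theorem lemma2p2:
  fixes r :: "int \<Rightarrow> bit"
  assumes "laurent r"
  shows "T (poly_part r) = poly_part (S r) \<and>
         (\<forall>n::nat. (T ^^ n) (poly_part r) = poly_part ((S ^^ n) r))"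
  using T_poly_part funpow_intertwine_on[of laurent S T poly_part] laurent_S assms
  by blast

end
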